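(* Let $(X,\mu)$ be a discrete-time BRW and $A\subseteq X$ nonempty. The following are equivalent: (1) $q(x,A)=\bar q(x)$ for all $x\in X$; (2) $q_0(x,A)\le\bar q(x)$ for all $x\in X$; (3) for every $x\in X$, either $\bar q(x)=1$ or, conditioned on global survival starting from one particle at $x$, local survival in $A$ occurs with probability $1$.
   Context: $S_X:=\{f:X\to\mathbb N:\sum_yf(y)<\infty\}$; a discrete-time BRW $(X,\mu)$: probability measures $\mu_x$ on $S_X$, each particle at $x$ independently replaced by $f(y)$ particles at each $y$, $f\sim\mu_x$; $\eta_n(y)$ is the number of particles at $y$ in generation $n$. For $n\ge0$, $q_n(x,A)$ is the probability, starting with one particle at $x$, that $\eta_k(y)=0$ for all $k\ge n+1$ and all $y\in A$; $q(x,A):=\lim_nq_n(x,A)$ is the probability of local extinction in $A$, $\bar q(x):=q(x,X)$. Local survival in $A$ is the complement of local extinction in $A$; global survival is the event that particles exist at every generation. *)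

theory Defs
  imports "HOL-Probability.Probability" "HOL-Library.Multiset"
begin

text \<open>
  A configuration is a finitely supported function X to nat, i.e. an 'a multiset
  (count eta y = number of particles at y).  The offspring law of a particle at x is
  mu x, a probability distribution on configurations (a pmf, since S_X is countable).

  Realisation: independent random variables omega (n, i, x) with law mu x, for all
  generations n, particle indices i and sites x.  In generation n the particles at
  site y are numbered 0, ..., count (eta n) y - 1, and particle i at y is replaced by
  the configuration omega (n, i, y); all replacements are independent.
\<close>

definition brw_space :: "('a \<Rightarrow> 'a multiset pmf) \<Rightarrow> (nat \<times> nat \<times> 'a \<Rightarrow> 'a multiset) measure" where
  "brw_space \<mu> = PiM UNIV (\<lambda>(n, i, x). measure_pmf (\<mu> x))"

fun brw_gen :: "'a \<Rightarrow> (nat \<times> nat \<times> 'a \<Rightarrow> 'a multiset) \<Rightarrow> nat \<Rightarrow> 'a multiset" where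
  "brw_gen x0 \<omega> 0 = {#x0#}"
| "brw_gen x0 \<omega> (Suc n) =
     (\<Sum>y\<in>set_mset (brw_gen x0 \<omega> n). \<Sum>i<count (brw_gen x0 \<omega> n) y. \<omega> (n, i, y))"

definition brw_qn :: "('a \<Rightarrow> 'a multiset pmf) \<Rightarrow> nat \<Rightarrow> 'a \<Rightarrow> 'a set \<Rightarrow> real" where
  "brw_qn \<mu> n x A = measure (brw_space \<mu>)
     {\<omega> \<in> space (brw_space \<mu>). \<forall>k\<ge>Suc n. \<forall>y\<in>A. count (brw_gen x \<omega> k) y = 0}"

definition brw_q :: "('a \<Rightarrow> 'a multiset pmf) \<Rightarrow> 'a \<Rightarrow> 'a set \<Rightarrow> real" where
  "brw_q \<mu> x A = lim (\<lambda>n. brw_qn \<mu> n x A)"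

definition brw_qbar :: "('a \<Rightarrow> 'a multiset pmf) \<Rightarrow> 'a \<Rightarrow> real" where
  "brw_qbar \<mu> x = brw_q \<mu> x UNIV"

definition global_survival :: "('a \<Rightarrow> 'a multiset pmf) \<Rightarrow> 'a \<Rightarrow> (nat \<times> nat \<times> 'a \<Rightarrow> 'a multiset) set" where
  "global_survival \<mu> x = {\<omega> \<in> space (brw_space \<mu>). \<forall>n. brw_gen x \<omega> n \<noteq> {#}}"

definition local_survival :: "('a \<Rightarrow> 'a multiset pmf) \<Rightarrow> 'a \<Rightarrow> 'a set \<Rightarrow> (nat \<times> nat \<times> 'a \<Rightarrow> 'a multiset) set" where
  "local_survival \<mu> x A = space (brw_space \<mu>) -
     {\<omega> \<in> space (brw_space \<mu>). \<exists>n. \<forall>k\<ge>Suc n. \<forall>y\<in>A. count (brw_gen x \<omega> k) y = 0}"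

end

theory Submission
  imports Defs
begin

text \<open>
  Let \<open>G(w)(x) = E [\<Prod>z\<in>#f. w z]\<close>, \<open>f\<close> distributed as \<open>\<mu> x\<close>, be the offspring
  generating functional.  By the branching property, the process started from a configuration
  \<open>\<zeta>\<close> consists of independent processes started from the particles of \<open>\<zeta>\<close>; hence the
  probability of an avoidance event (no particle of generation \<open>k\<close> lies in \<open>B k\<close>, for all \<open>k\<close>)
  and of local extinction is multiplicative over the initial particles.  Conditioning on the
  first generation then gives \<open>q\<^sub>n\<^sub>+\<^sub>1(\<cdot>,A) = G(q\<^sub>n(\<cdot>,A))\<close> and \<open>q(\<cdot>,A) = G(q(\<cdot>,A))\<close>, in particular
  \<open>qbar = G(qbar)\<close>.  As \<open>G\<close> is monotone, \<open>q\<^sub>0(\<cdot>,A) \<le> qbar\<close> propagates to all \<open>q\<^sub>n(\<cdot>,A)\<close> and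
  in the limit to \<open>q(\<cdot>,A)\<close>; since global extinction implies local extinction, \<open>qbar \<le> q(\<cdot>,A)\<close>
  always, which gives (1) \<open>\<longleftrightarrow>\<close> (2).  Finally local survival implies global survival, so the
  conditional probability in (3) equals \<open>(1 - q(x,A)) / (1 - qbar(x))\<close>, giving (1) \<open>\<longleftrightarrow>\<close> (3).
\<close>

text \<open>Configurations form a countable type, so configuration-valued random variables can be
  handled with the discrete measurable space \<open>count_space UNIV\<close>.\<close>

instance multiset :: (countable) countable
  by (rule countable_classI[of "\<lambda>M. to_nat (SOME xs. mset xs = M)"])
     (metis (mono_tags, lifting) ex_mset someI_ex to_nat_split)

text \<open>Products of probability spaces over disjoint index sets merge into the product over
  their union; this is the independence of disjoint blocks of coordinates.\<close>

lemma distr_merge_PiM_infinite: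
  assumes M: "\<And>i. prob_space (M i)" and IJ: "I \<inter> J = {}"
  shows "distr (PiM I M \<Otimes>\<^sub>M PiM J M) (PiM (I \<union> J) M) (merge I J) = PiM (I \<union> J) M"
proof (rule measure_eqI_PiM_infinite[symmetric, OF refl])
  interpret I: prob_space "PiM I M" using M by (intro prob_space_PiM) auto
  interpret J: prob_space "PiM J M" using M by (intro prob_space_PiM) auto
  interpret IJ: prob_space "PiM (I \<union> J) M" using M by (intro prob_space_PiM) auto
  show "finite_measure (PiM (I \<union> J) M)" by unfold_locales
  fix K A assume K: "finite K" "K \<subseteq> I \<union> J" and A: "\<And>i. i \<in> K \<Longrightarrow> A i \<in> sets (M i)"
  let ?X = "prod_emb (I \<union> J) M K (Pi\<^sub>E K A)"
  let ?XI = "prod_emb I M (K \<inter> I) (Pi\<^sub>E (K \<inter> I) A)"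
  let ?XJ = "prod_emb J M (K \<inter> J) (Pi\<^sub>E (K \<inter> J) A)"
  have "PiM (I \<union> J) M ?X = (\<Prod>i\<in>K. M i (A i))"
    using M K A by (intro emeasure_PiM_emb) auto
  also have "\<dots> = (\<Prod>i\<in>K \<inter> I. M i (A i)) * (\<Prod>i\<in>K \<inter> J. M i (A i))"
    using K IJ by (subst prod.union_disjoint[symmetric]) (auto intro!: prod.cong)
  also have "\<dots> = PiM I M ?XI * PiM J M ?XJ"
    using M K A by (subst (1 2) emeasure_PiM_emb) auto
  also have "\<dots> = (PiM I M \<Otimes>\<^sub>M PiM J M) (?XI \<times> ?XJ)"
    using K A by (intro J.emeasure_pair_measure_Times[symmetric] sets_PiM_I) auto
  also have "?XI \<times> ?XJ = merge I J -` ?X \<inter> space (PiM I M \<Otimes>\<^sub>M PiM J M)"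
    using K IJ by (auto simp: prod_emb_iff space_pair_measure space_PiM PiE_iff disjoint_iff
        extensional_def merge_def restrict_def split: if_splits) blast
  finally show "PiM (I \<union> J) M ?X = distr (PiM I M \<Otimes>\<^sub>M PiM J M) (PiM (I \<union> J) M) (merge I J) ?X"
    using K A by (subst emeasure_distr) (auto intro!: sets_PiM_I)
qed simp

lemma prod_mset_image_sum:
  "(\<Prod>z\<in>#sum f S. w z) = (\<Prod>a\<in>S. \<Prod>z\<in>#f a. w z)"
  by (induction S rule: infinite_finite_induct) auto

lemma prod_mset_if_zero:
  "(\<Prod>z\<in>#M. if P z then c z else (0::'b::comm_semiring_1)) =
   (if \<forall>z\<in>#M. P z then \<Prod>z\<in>#M. c z else 0)"
  by (induction M) auto

lemma prod_mset_nonneg: "(\<And>z. 0 \<le> f z) \<Longrightarrow> 0 \<le> (\<Prod>z\<in>#M. f z :: 'b::linordered_semidom)"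
  by (induction M) auto

lemma prod_mset_ennreal:
  assumes "\<And>z. 0 \<le> f z"
  shows "(\<Prod>z\<in>#M. ennreal (f z)) = ennreal (\<Prod>z\<in>#M. f z)"
  using assms by (induction M) (auto simp: ennreal_mult')

lemma prod_mset_mono_ennreal:
  assumes "\<And>z. f z \<le> (g z :: ennreal)"
  shows "(\<Prod>z\<in>#M. f z) \<le> (\<Prod>z\<in>#M. g z)"
  using assms by (induction M) (auto intro: mult_mono)

lemma tendsto_prod_mset:
  fixes f :: "nat \<Rightarrow> 'b \<Rightarrow> real"
  assumes "\<And>z. (\<lambda>n. f n z) \<longlonglongrightarrow> L z"
  shows "(\<lambda>n. \<Prod>z\<in>#M. f n z) \<longlonglongrightarrow> (\<Prod>z\<in>#M. L z)"
  by (induction M) (auto intro: tendsto_mult assms)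

lemma measurable_sum_countable:
  fixes f :: "'i \<Rightarrow> 'm \<Rightarrow> 'b::{countable, comm_monoid_add}"
  assumes "finite S" "\<And>s. s \<in> S \<Longrightarrow> f s \<in> measurable M (count_space UNIV)"
  shows "(\<lambda>\<omega>. \<Sum>s\<in>S. f s \<omega>) \<in> measurable M (count_space UNIV)"
  using assms
proof (induction S rule: finite_induct)
  case (insert s S)
  have "(\<lambda>\<omega>. (\<lambda>a \<omega>. a + (\<Sum>s\<in>S. f s \<omega>)) (f s \<omega>) \<omega>) \<in> measurable M (count_space UNIV)"
    by (rule measurable_compose_countable[where g = "f s"])
       (auto intro: measurable_compose[OF insert.IH] insert.prems)
  then show ?case using insert by simp
qed simp

lemma all_nat_unfold: "(\<forall>k. P k) \<longleftrightarrow> P 0 \<and> (\<forall>k. P (Suc k))"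
  by (metis not0_implies_Suc)

fun brw_from :: "'a multiset \<Rightarrow> (nat \<times> nat \<times> 'a \<Rightarrow> 'a multiset) \<Rightarrow> nat \<Rightarrow> 'a multiset" where
  "brw_from \<zeta> \<omega> 0 = \<zeta>"
| "brw_from \<zeta> \<omega> (Suc n) =
     (\<Sum>y\<in>set_mset (brw_from \<zeta> \<omega> n). \<Sum>i<count (brw_from \<zeta> \<omega> n) y. \<omega> (n, i, y))"

lemma brw_gen_eq_brw_from: "brw_gen x \<omega> n = brw_from {#x#} \<omega> n"
  by (induction n) auto

definition brw_shift :: "(nat \<times> nat \<times> 'a \<Rightarrow> 'b) \<Rightarrow> nat \<times> nat \<times> 'a \<Rightarrow> 'b" where
  "brw_shift \<omega> = (\<lambda>(n, i, y). \<omega> (Suc n, i, y))"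

lemma brw_from_Suc_shift: "brw_from \<zeta> \<omega> (Suc k) = brw_from (brw_from \<zeta> \<omega> 1) (brw_shift \<omega>) k"
  by (induction k) (auto simp: brw_shift_def)

lemma brw_from_extinct: "brw_from \<zeta> \<omega> n = {#} \<Longrightarrow> n \<le> k \<Longrightarrow> brw_from \<zeta> \<omega> k = {#}"
  by (induction k) (auto simp: le_Suc_eq)

definition brw_component :: "('a \<Rightarrow> 'a multiset pmf) \<Rightarrow> nat \<times> nat \<times> 'a \<Rightarrow> 'a multiset measure" where
  "brw_component \<mu> j = measure_pmf (\<mu> (snd (snd j)))"

lemma brw_space_eq: "brw_space \<mu> = PiM UNIV (brw_component \<mu>)"
  unfolding brw_space_def brw_component_def by (simp add: split_def)

lemma prob_space_brw_component: "prob_space (brw_component \<mu> j)"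
  by (simp add: brw_component_def prob_space_measure_pmf)

lemma prob_space_PiM_brw_component: "prob_space (PiM I (brw_component \<mu>))"
  by (intro prob_space_PiM prob_space_brw_component)

lemma prob_space_brw_space: "prob_space (brw_space \<mu>)"
  unfolding brw_space_eq by (rule prob_space_PiM_brw_component)

lemma space_brw_space [simp]: "space (brw_space \<mu>) = UNIV"
  by (auto simp: brw_space_eq space_PiM brw_component_def)

definition gen0_coords :: "(nat \<times> nat \<times> 'a) set" where
  "gen0_coords = {j. fst j = 0}"

lemma merge_gen0_coords_0 [simp]: "merge gen0_coords (- gen0_coords) (a, b) (0, i, y) = a (0, i, y)"
  by (simp add: gen0_coords_def merge_def)

lemma brw_shift_merge [simp]: "brw_shift (merge gen0_coords (- gen0_coords) (a, b)) = brw_shift b"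
  by (auto simp: gen0_coords_def brw_shift_def fun_eq_iff)

definition avoid :: "(nat \<Rightarrow> 'a set) \<Rightarrow> 'a multiset \<Rightarrow> (nat \<times> nat \<times> 'a \<Rightarrow> 'a multiset) set" where
  "avoid B \<zeta> = {\<omega>. \<forall>k. \<forall>y\<in>B k. count (brw_from \<zeta> \<omega> k) y = 0}"

definition after :: "nat \<Rightarrow> 'a set \<Rightarrow> nat \<Rightarrow> 'a set" where
  "after n A k = (if n < k then A else {})"

definition truncate :: "nat \<Rightarrow> (nat \<Rightarrow> 'a set) \<Rightarrow> nat \<Rightarrow> 'a set" where
  "truncate N B k = (if k \<le> N then B k else {})"

definition local_ext :: "'a set \<Rightarrow> 'a multiset \<Rightarrow> (nat \<times> nat \<times> 'a \<Rightarrow> 'a multiset) set" where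
  "local_ext A \<zeta> = (\<Union>n. avoid (after n A) \<zeta>)"

lemma avoid_unfold:
  "avoid B \<zeta> = (if \<forall>z\<in>#\<zeta>. z \<notin> B 0
     then {\<omega>. brw_shift \<omega> \<in> avoid (\<lambda>k. B (Suc k)) (brw_from \<zeta> \<omega> 1)} else {})"
  unfolding avoid_def
  by (subst all_nat_unfold) (simp only: brw_from_Suc_shift, auto simp: count_eq_zero_iff)

lemma avoid_after_Suc:
  "avoid (after (Suc n) A) \<zeta> = {\<omega>. brw_shift \<omega> \<in> avoid (after n A) (brw_from \<zeta> \<omega> 1)}"
proof -
  have "(\<lambda>k. after (Suc n) A (Suc k)) = after n A"
    by (simp add: after_def fun_eq_iff)
  then show ?thesis
    by (subst avoid_unfold) (simp add: after_def)
qed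

lemma incseq_avoid_after: "incseq (\<lambda>n. avoid (after n A) \<zeta>)"
  by (auto simp: incseq_def avoid_def after_def)

lemma local_ext_unfold: "local_ext A \<zeta> = {\<omega>. brw_shift \<omega> \<in> local_ext A (brw_from \<zeta> \<omega> 1)}"
proof -
  have "local_ext A \<zeta> = (\<Union>n. avoid (after (Suc n) A) \<zeta>)"
    unfolding local_ext_def using incseq_avoid_after[of A \<zeta>]
    by (auto simp: incseq_Suc_iff)
  then show ?thesis
    by (auto simp: avoid_after_Suc local_ext_def simp del: brw_from.simps)
qed

lemma local_ext_UNIV_subset: "local_ext UNIV \<zeta> \<subseteq> local_ext A \<zeta>"
  by (auto simp: local_ext_def avoid_def after_def)

definition offspring_gf :: "('a \<Rightarrow> 'a multiset pmf) \<Rightarrow> ('a \<Rightarrow> ennreal) \<Rightarrow> 'a \<Rightarrow> ennreal" where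
  "offspring_gf \<mu> w x = (\<integral>\<^sup>+m. (\<Prod>z\<in>#m. w z) \<partial>measure_pmf (\<mu> x))"

lemma offspring_gf_mono: "(\<And>z. w z \<le> w' z) \<Longrightarrow> offspring_gf \<mu> w x \<le> offspring_gf \<mu> w' x"
  unfolding offspring_gf_def by (intro nn_integral_mono prod_mset_mono_ennreal)

definition multiplicative ::
    "('a \<Rightarrow> 'a multiset pmf) \<Rightarrow> ('a multiset \<Rightarrow> (nat \<times> nat \<times> 'a \<Rightarrow> 'a multiset) set) \<Rightarrow> bool"
  where "multiplicative \<mu> F \<longleftrightarrow>
    (\<forall>\<zeta>. emeasure (brw_space \<mu>) (F \<zeta>) = (\<Prod>z\<in>#\<zeta>. emeasure (brw_space \<mu>) (F {#z#})))"

context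
  fixes \<mu> :: "'a::countable \<Rightarrow> 'a multiset pmf"
begin

lemma measurable_coordinate: "(\<lambda>\<omega>. \<omega> j) \<in> measurable (brw_space \<mu>) (count_space UNIV)"
proof -
  have "(\<lambda>\<omega>. \<omega> j) \<in> measurable (brw_space \<mu>) (brw_component \<mu> j)"
    unfolding brw_space_eq by (rule measurable_component_singleton) simp
  moreover have "measurable (brw_space \<mu>) (brw_component \<mu> j) =
      measurable (brw_space \<mu>) (count_space UNIV)"
    by (rule measurable_cong_sets) (simp_all add: brw_component_def)
  ultimately show ?thesis by simp
qed

lemma measurable_brw_from:
  "(\<lambda>\<omega>. brw_from \<zeta> \<omega> k) \<in> measurable (brw_space \<mu>) (count_space UNIV)"
proof (induction k)
  case (Suc k)
  have "(\<lambda>\<omega>. (\<lambda>m \<omega>. \<Sum>y\<in>set_mset m. \<Sum>i<count m y. \<omega> (k, i, y)) (brw_from \<zeta> \<omega> k) \<omega>)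
        \<in> measurable (brw_space \<mu>) (count_space UNIV)"
    by (rule measurable_compose_countable[OF _ Suc])
       (intro measurable_sum_countable measurable_coordinate; simp)
  then show ?case by simp
qed simp

lemma sets_brw_from_event: "{\<omega>. P (brw_from \<zeta> \<omega> k)} \<in> sets (brw_space \<mu>)"
  using measurable_sets[OF measurable_brw_from, of "{m. P m}" \<zeta> k] by (simp add: vimage_def)

lemma measurable_shift:
  assumes "\<And>n i y. (Suc n, i, y) \<in> I"
  shows "brw_shift \<in> measurable (PiM I (brw_component \<mu>)) (brw_space \<mu>)"
  unfolding brw_space_eq
proof (rule measurable_PiM_single')
  fix j :: "nat \<times> nat \<times> 'a"
  obtain n i y where j: "j = (n, i, y)" by (cases j)
  have "(\<lambda>\<omega>. \<omega> (Suc n, i, y)) \<in> measurable (PiM I (brw_component \<mu>)) (brw_component \<mu> (Suc n, i, y))"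
    using assms by (rule measurable_component_singleton)
  then show "(\<lambda>\<omega>. brw_shift \<omega> j) \<in> measurable (PiM I (brw_component \<mu>)) (brw_component \<mu> j)"
    by (simp add: j brw_shift_def brw_component_def)
qed (auto simp: brw_component_def)

lemma sets_shift_event:
  assumes "\<And>m. F m \<in> sets (brw_space \<mu>)"
  shows "{\<omega>. brw_shift \<omega> \<in> F (brw_from \<zeta> \<omega> 1)} \<in> sets (brw_space \<mu>)"
proof -
  have shift: "brw_shift \<in> measurable (brw_space \<mu>) (brw_space \<mu>)"
    using measurable_shift[of UNIV] by (simp add: brw_space_eq)
  have "(\<lambda>\<omega>. (\<lambda>m \<omega>. brw_shift \<omega> \<in> F m) (brw_from \<zeta> \<omega> 1) \<omega>)
      \<in> measurable (brw_space \<mu>) (count_space UNIV)"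
    by (rule measurable_compose_countable[OF _ measurable_brw_from])
       (rule pred_sets2[OF assms shift])
  then show ?thesis by (simp add: pred_def)
qed

lemma distr_merge_gen0_brw_space:
  "distr (PiM gen0_coords (brw_component \<mu>) \<Otimes>\<^sub>M PiM (- gen0_coords) (brw_component \<mu>))
     (brw_space \<mu>) (merge gen0_coords (- gen0_coords)) = brw_space \<mu>"
  using distr_merge_PiM_infinite[of "brw_component \<mu>" gen0_coords "- gen0_coords"]
  by (simp add: brw_space_eq prob_space_brw_component)

lemma measurable_merge_gen0:
  "merge gen0_coords (- gen0_coords) \<in> measurable
     (PiM gen0_coords (brw_component \<mu>) \<Otimes>\<^sub>M PiM (- gen0_coords) (brw_component \<mu>)) (brw_space \<mu>)"
  using measurable_merge[of gen0_coords "- gen0_coords" "brw_component \<mu>"] by (simp add: brw_space_eq)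

lemma distr_shift_brw_space:
  "distr (PiM (- gen0_coords) (brw_component \<mu>)) (brw_space \<mu>) brw_shift = brw_space \<mu>"
proof -
  define f where "f = (\<lambda>(n::nat, i::nat, y::'a). (Suc n, i, y))"
  have "distr (PiM (- gen0_coords) (brw_component \<mu>)) (PiM UNIV (\<lambda>j. brw_component \<mu> (f j)))
      (\<lambda>\<omega>. \<lambda>j\<in>UNIV. \<omega> (f j)) = PiM UNIV (\<lambda>j. brw_component \<mu> (f j))"
    by (rule distr_PiM_reindex)
       (auto simp: f_def gen0_coords_def inj_on_def prob_space_brw_component)
  moreover have "(\<lambda>j. brw_component \<mu> (f j)) = brw_component \<mu>"
    by (auto simp: brw_component_def f_def fun_eq_iff)
  moreover have "(\<lambda>\<omega>. \<lambda>j\<in>UNIV. \<omega> (f j)) = brw_shift"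
    by (auto simp: brw_shift_def f_def fun_eq_iff)
  ultimately show ?thesis
    unfolding brw_space_eq by metis
qed

text \<open>Branching property at the first generation: conditionally on the first generation
  \<open>\<eta>\<close>, the shifted offspring variables are again distributed as \<open>brw_space \<mu>\<close>.\<close>

lemma emeasure_shift_event:
  assumes F: "\<And>m. F m \<in> sets (brw_space \<mu>)"
  shows "emeasure (brw_space \<mu>) {\<omega>. brw_shift \<omega> \<in> F (brw_from \<zeta> \<omega> 1)}
       = (\<integral>\<^sup>+\<omega>. emeasure (brw_space \<mu>) (F (brw_from \<zeta> \<omega> 1)) \<partial>brw_space \<mu>)"
proof -
  let ?P = "brw_space \<mu>"
  let ?G0 = "PiM gen0_coords (brw_component \<mu>)" and ?G1 = "PiM (- gen0_coords) (brw_component \<mu>)"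
  let ?mg = "merge gen0_coords (- gen0_coords)"
  let ?S = "{\<omega>. brw_shift \<omega> \<in> F (brw_from \<zeta> \<omega> 1)}"
  define H where "H \<omega> = emeasure ?P (F (brw_from \<zeta> \<omega> 1))" for \<omega>
  interpret G1: prob_space ?G1 by (rule prob_space_PiM_brw_component)
  have S: "?S \<in> sets ?P" by (rule sets_shift_event[OF F])
  have H: "H \<in> borel_measurable ?P"
    unfolding H_def by (rule measurable_compose_countable[OF _ measurable_brw_from]) simp
  have shift: "brw_shift \<in> measurable ?G1 ?P"
    by (rule measurable_shift) (simp add: gen0_coords_def)
  have "emeasure (distr (?G0 \<Otimes>\<^sub>M ?G1) ?P ?mg) ?S = emeasure (?G0 \<Otimes>\<^sub>M ?G1) (?mg -` ?S \<inter> space (?G0 \<Otimes>\<^sub>M ?G1))"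
    by (rule emeasure_distr[OF measurable_merge_gen0 S])
  then have "emeasure ?P ?S = emeasure (?G0 \<Otimes>\<^sub>M ?G1) (?mg -` ?S \<inter> space (?G0 \<Otimes>\<^sub>M ?G1))"
    by (simp only: distr_merge_gen0_brw_space)
  also have "\<dots> = (\<integral>\<^sup>+a. emeasure ?G1 (Pair a -` (?mg -` ?S \<inter> space (?G0 \<Otimes>\<^sub>M ?G1))) \<partial>?G0)"
    by (rule G1.emeasure_pair_measure_alt) (rule measurable_sets[OF measurable_merge_gen0 S])
  also have "\<dots> = (\<integral>\<^sup>+a. H a \<partial>?G0)"
  proof (rule nn_integral_cong)
    fix a assume a: "a \<in> space ?G0"
    have "Pair a -` (?mg -` ?S \<inter> space (?G0 \<Otimes>\<^sub>M ?G1)) = brw_shift -` F (brw_from \<zeta> a 1) \<inter> space ?G1"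
      using a by (auto simp: space_pair_measure)
    also have "emeasure ?G1 \<dots> = emeasure (distr ?G1 ?P brw_shift) (F (brw_from \<zeta> a 1))"
      by (rule emeasure_distr[OF shift F, symmetric])
    finally show "emeasure ?G1 (Pair a -` (?mg -` ?S \<inter> space (?G0 \<Otimes>\<^sub>M ?G1))) = H a"
      by (simp only: distr_shift_brw_space H_def)
  qed
  also have "\<dots> = (\<integral>\<^sup>+a. \<integral>\<^sup>+b. H (?mg (a, b)) \<partial>?G1 \<partial>?G0)"
    by (simp add: H_def G1.emeasure_space_1)
  also have "\<dots> = (\<integral>\<^sup>+x. H (?mg x) \<partial>(?G0 \<Otimes>\<^sub>M ?G1))"
    by (rule G1.nn_integral_fst) (rule measurable_compose[OF measurable_merge_gen0 H])
  also have "\<dots> = (\<integral>\<^sup>+\<omega>. H \<omega> \<partial>?P)"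
    using nn_integral_distr[OF measurable_merge_gen0, of H] H
    by (simp only: distr_merge_gen0_brw_space)
  finally show ?thesis unfolding H_def .
qed

lemma nn_integral_prod_coordinates:
  assumes S: "finite S"
  shows "(\<integral>\<^sup>+\<omega>. (\<Prod>j\<in>S. h j (\<omega> j) :: ennreal) \<partial>brw_space \<mu>) = (\<Prod>j\<in>S. \<integral>\<^sup>+m. h j m \<partial>brw_component \<mu> j)"
proof -
  interpret product_prob_space "brw_component \<mu>" UNIV
    by (simp add: product_prob_space_def product_prob_space_axioms_def product_sigma_finite_def
        prob_space_brw_component prob_space_imp_sigma_finite)
  have meas: "(\<lambda>x. h j x) \<in> borel_measurable (brw_component \<mu> j)" for j
    by (simp add: brw_component_def)
  have restr: "(\<lambda>x. restrict x S) \<in> measurable (PiM UNIV (brw_component \<mu>)) (PiM S (brw_component \<mu>))"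
    by (rule measurable_restrict_subset) simp
  have prod_meas: "(\<lambda>x. \<Prod>j\<in>S. h j (x j)) \<in> borel_measurable (PiM S (brw_component \<mu>))"
  proof (rule borel_measurable_prod_ennreal)
    fix j assume "j \<in> S"
    then show "(\<lambda>x. h j (x j)) \<in> borel_measurable (PiM S (brw_component \<mu>))"
      using measurable_compose[OF measurable_component_singleton[of j S "brw_component \<mu>"] meas[of j]]
      by simp
  qed
  have "(\<integral>\<^sup>+\<omega>. (\<Prod>j\<in>S. h j (\<omega> j)) \<partial>brw_space \<mu>)
      = (\<integral>\<^sup>+\<omega>. (\<Prod>j\<in>S. h j (restrict \<omega> S j)) \<partial>PiM UNIV (brw_component \<mu>))"
    unfolding brw_space_eq by (intro nn_integral_cong prod.cong) auto
  also have "\<dots> = (\<integral>\<^sup>+x. (\<Prod>j\<in>S. h j (x j)) \<partial>PiM S (brw_component \<mu>))"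
    using nn_integral_distr[OF restr, of "\<lambda>x. \<Prod>j\<in>S. h j (x j)"]
    by (simp add: distr_PiM_restrict_finite[OF S] prod_meas)
  also have "\<dots> = (\<Prod>j\<in>S. \<integral>\<^sup>+m. h j m \<partial>brw_component \<mu> j)"
    by (rule product_nn_integral_prod[OF S meas])
  finally show ?thesis .
qed

lemma nn_integral_first_generation:
  "(\<integral>\<^sup>+\<omega>. (\<Prod>z\<in>#brw_from \<zeta> \<omega> 1. w z) \<partial>brw_space \<mu>) = (\<Prod>y\<in>#\<zeta>. offspring_gf \<mu> w y)"
proof -
  define J where "J = (SIGMA y:set_mset \<zeta>. {..<count \<zeta> y})"
  define idx where "idx = (\<lambda>(y::'a, i::nat). (0::nat, i, y))"
  let ?W = "\<lambda>m. \<Prod>z\<in>#m. w z"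
  have inj: "inj_on idx J" and fin: "finite J"
    by (auto simp: inj_on_def idx_def J_def)
  have reindex: "(\<Prod>j\<in>idx ` J. g j) = (\<Prod>y\<in>set_mset \<zeta>. \<Prod>i<count \<zeta> y. g (0, i, y))"
    for g :: "nat \<times> nat \<times> 'a \<Rightarrow> ennreal"
    unfolding prod.reindex[OF inj] unfolding J_def
    by (subst prod.Sigma) (auto simp: split_def idx_def)
  have "(\<integral>\<^sup>+\<omega>. ?W (brw_from \<zeta> \<omega> 1) \<partial>brw_space \<mu>) = (\<integral>\<^sup>+\<omega>. (\<Prod>j\<in>idx ` J. ?W (\<omega> j)) \<partial>brw_space \<mu>)"
    by (intro nn_integral_cong)
       (simp add: prod_mset_image_sum reindex)
  also have "\<dots> = (\<Prod>j\<in>idx ` J. \<integral>\<^sup>+m. ?W m \<partial>brw_component \<mu> j)"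
    using fin by (intro nn_integral_prod_coordinates) simp
  also have "\<dots> = (\<Prod>y\<in>set_mset \<zeta>. offspring_gf \<mu> w y ^ count \<zeta> y)"
    by (simp add: reindex brw_component_def offspring_gf_def)
  also have "\<dots> = (\<Prod>y\<in>#\<zeta>. offspring_gf \<mu> w y)"
    by (simp add: image_prod_mset_multiplicity)
  finally show ?thesis .
qed

lemma emeasure_shift_event_multiplicative:
  assumes F: "\<And>m. F m \<in> sets (brw_space \<mu>)" and mult: "multiplicative \<mu> F"
  shows "emeasure (brw_space \<mu>) {\<omega>. brw_shift \<omega> \<in> F (brw_from \<zeta> \<omega> 1)}
       = (\<Prod>y\<in>#\<zeta>. offspring_gf \<mu> (\<lambda>z. emeasure (brw_space \<mu>) (F {#z#})) y)"
proof -
  have mult_eq: "emeasure (brw_space \<mu>) (F m) = (\<Prod>z\<in>#m. emeasure (brw_space \<mu>) (F {#z#}))" for m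
    using mult unfolding multiplicative_def by blast
  have "emeasure (brw_space \<mu>) {\<omega>. brw_shift \<omega> \<in> F (brw_from \<zeta> \<omega> 1)}
      = (\<integral>\<^sup>+\<omega>. emeasure (brw_space \<mu>) (F (brw_from \<zeta> \<omega> 1)) \<partial>brw_space \<mu>)"
    by (rule emeasure_shift_event[OF F])
  also have "\<dots> = (\<integral>\<^sup>+\<omega>. (\<Prod>z\<in>#brw_from \<zeta> \<omega> 1. emeasure (brw_space \<mu>) (F {#z#})) \<partial>brw_space \<mu>)"
    by (intro nn_integral_cong) (rule mult_eq)
  finally show ?thesis
    by (simp only: nn_integral_first_generation)
qed

text \<open>Avoidance and local extinction are countable intersections and unions of events
  determined by single generations, hence measurable.\<close>

lemma sets_avoid: "avoid B \<zeta> \<in> sets (brw_space \<mu>)"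
proof -
  have "{\<omega>. \<forall>y\<in>B k. count (brw_from \<zeta> \<omega> k) y = 0} \<in> sets (brw_space \<mu>)" for k
    using sets_brw_from_event[of "\<lambda>m. \<forall>y\<in>B k. count m y = 0" \<zeta> k] by simp
  then have "{\<omega> \<in> space (brw_space \<mu>). \<forall>k. \<forall>y\<in>B k. count (brw_from \<zeta> \<omega> k) y = 0} \<in> sets (brw_space \<mu>)"
    by (intro sets.sets_Collect_countable_All) simp
  then show ?thesis by (simp add: avoid_def)
qed

lemma sets_local_ext: "local_ext A \<zeta> \<in> sets (brw_space \<mu>)"
  unfolding local_ext_def by (rule sets.countable_UN) (rule image_subsetI, rule sets_avoid)

lemma multiplicative_iff_measure:
  "multiplicative \<mu> F \<longleftrightarrow>
     (\<forall>\<zeta>. measure (brw_space \<mu>) (F \<zeta>) = (\<Prod>z\<in>#\<zeta>. measure (brw_space \<mu>) (F {#z#})))"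
proof -
  interpret prob_space "brw_space \<mu>" by (rule prob_space_brw_space)
  show ?thesis
    unfolding multiplicative_def emeasure_eq_measure
    by (simp add: prod_mset_ennreal prod_mset_nonneg)
qed

lemma multiplicative_limit:
  assumes mult: "\<And>n. multiplicative \<mu> (F n)"
    and lim: "\<And>\<zeta>. (\<lambda>n. measure (brw_space \<mu>) (F n \<zeta>)) \<longlonglongrightarrow> measure (brw_space \<mu>) (G \<zeta>)"
  shows "multiplicative \<mu> G"
  unfolding multiplicative_iff_measure
proof
  fix \<zeta>
  have mult_\<zeta>: "measure (brw_space \<mu>) (F n \<zeta>) = (\<Prod>z\<in>#\<zeta>. measure (brw_space \<mu>) (F n {#z#}))" for n
    using mult[of n] unfolding multiplicative_iff_measure by blast
  have "(\<lambda>n. \<Prod>z\<in>#\<zeta>. measure (brw_space \<mu>) (F n {#z#})) \<longlonglongrightarrow> (\<Prod>z\<in>#\<zeta>. measure (brw_space \<mu>) (G {#z#}))"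
    by (intro tendsto_prod_mset lim)
  then have "(\<lambda>n. measure (brw_space \<mu>) (F n \<zeta>)) \<longlonglongrightarrow> (\<Prod>z\<in>#\<zeta>. measure (brw_space \<mu>) (G {#z#}))"
    by (simp only: mult_\<zeta>)
  then show "measure (brw_space \<mu>) (G \<zeta>) = (\<Prod>z\<in>#\<zeta>. measure (brw_space \<mu>) (G {#z#}))"
    using lim LIMSEQ_unique by blast
qed

lemma multiplicative_avoid_finite:
  "(\<And>k. N < k \<Longrightarrow> B k = {}) \<Longrightarrow> multiplicative \<mu> (avoid B)"
proof (induction N arbitrary: B)
  case 0
  interpret prob_space "brw_space \<mu>" by (rule prob_space_brw_space)
  have "avoid B \<zeta> = (if \<forall>z\<in>#\<zeta>. z \<notin> B 0 then UNIV else {})" for \<zeta>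
    using 0 by (subst avoid_unfold) (auto simp: avoid_def)
  then have "emeasure (brw_space \<mu>) (avoid B \<zeta>) = (\<Prod>z\<in>#\<zeta>. if z \<notin> B 0 then 1 else 0)" for \<zeta>
    using emeasure_space_1 by (simp add: prod_mset_if_zero)
  then show ?case
    by (simp add: multiplicative_def)
next
  case (Suc N)
  let ?w = "\<lambda>z. emeasure (brw_space \<mu>) (avoid (\<lambda>k. B (Suc k)) {#z#})"
  have IH: "multiplicative \<mu> (avoid (\<lambda>k. B (Suc k)))"
    using Suc by auto
  have "emeasure (brw_space \<mu>) (avoid B \<zeta>) =
      (if \<forall>z\<in>#\<zeta>. z \<notin> B 0 then \<Prod>y\<in>#\<zeta>. offspring_gf \<mu> ?w y else 0)" for \<zeta>
    by (simp only: avoid_unfold[of B \<zeta>] if_distrib[of "emeasure (brw_space \<mu>)"]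
        emeasure_shift_event_multiplicative[OF sets_avoid IH] emeasure_empty)
  then show ?case
    by (simp add: multiplicative_def prod_mset_if_zero[symmetric])
qed

text \<open>Every avoidance event is the decreasing limit of its finite-horizon truncations, and
  local extinction is the increasing limit of the events \<open>avoid (after n A)\<close>.\<close>

lemma multiplicative_avoid: "multiplicative \<mu> (avoid B)"
proof (rule multiplicative_limit)
  interpret prob_space "brw_space \<mu>" by (rule prob_space_brw_space)
  show "multiplicative \<mu> (avoid (truncate N B))" for N
    by (rule multiplicative_avoid_finite[of N]) (simp add: truncate_def)
  have "avoid B \<zeta> = (\<Inter>N. avoid (truncate N B) \<zeta>)" and "decseq (\<lambda>N. avoid (truncate N B) \<zeta>)" for \<zeta>
    by (auto simp: avoid_def truncate_def decseq_def)
  then show "(\<lambda>N. measure (brw_space \<mu>) (avoid (truncate N B) \<zeta>)) \<longlonglongrightarrow> measure (brw_space \<mu>) (avoid B \<zeta>)" for \<zeta>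
    by (simp add: Lim_measure_decseq sets_avoid image_subset_iff)
qed

lemma tendsto_avoid_after:
  "(\<lambda>n. measure (brw_space \<mu>) (avoid (after n A) \<zeta>)) \<longlonglongrightarrow> measure (brw_space \<mu>) (local_ext A \<zeta>)"
proof -
  interpret prob_space "brw_space \<mu>" by (rule prob_space_brw_space)
  show ?thesis
    unfolding local_ext_def
    by (rule finite_Lim_measure_incseq) (auto simp: sets_avoid incseq_avoid_after)
qed

lemma multiplicative_local_ext: "multiplicative \<mu> (local_ext A)"
  by (rule multiplicative_limit[OF multiplicative_avoid tendsto_avoid_after])

lemma brw_qn_eq: "brw_qn \<mu> n x A = measure (brw_space \<mu>) (avoid (after n A) {#x#})"
proof -
  have "{\<omega> \<in> space (brw_space \<mu>). \<forall>k\<ge>Suc n. \<forall>y\<in>A. count (brw_gen x \<omega> k) y = 0} = avoid (after n A) {#x#}"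
    by (auto simp: avoid_def after_def brw_gen_eq_brw_from Suc_le_eq simp del: brw_from.simps)
  then show ?thesis by (simp add: brw_qn_def)
qed

lemma tendsto_brw_qn: "(\<lambda>n. brw_qn \<mu> n x A) \<longlonglongrightarrow> measure (brw_space \<mu>) (local_ext A {#x#})"
  unfolding brw_qn_eq by (rule tendsto_avoid_after)

lemma brw_q_eq: "brw_q \<mu> x A = measure (brw_space \<mu>) (local_ext A {#x#})"
  unfolding brw_q_def by (rule limI[OF tendsto_brw_qn])

lemma brw_qbar_eq: "brw_qbar \<mu> x = measure (brw_space \<mu>) (local_ext UNIV {#x#})"
  unfolding brw_qbar_def by (rule brw_q_eq)

lemma brw_qn_Suc: "ennreal (brw_qn \<mu> (Suc n) x A) = offspring_gf \<mu> (\<lambda>z. ennreal (brw_qn \<mu> n z A)) x"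
proof -
  interpret prob_space "brw_space \<mu>" by (rule prob_space_brw_space)
  have "ennreal (brw_qn \<mu> (Suc n) x A) =
      emeasure (brw_space \<mu>) {\<omega>. brw_shift \<omega> \<in> avoid (after n A) (brw_from {#x#} \<omega> 1)}"
    by (simp only: brw_qn_eq avoid_after_Suc emeasure_eq_measure)
  also have "\<dots> = offspring_gf \<mu> (\<lambda>z. emeasure (brw_space \<mu>) (avoid (after n A) {#z#})) x"
    using emeasure_shift_event_multiplicative[OF sets_avoid multiplicative_avoid, where \<zeta> = "{#x#}"] by simp
  finally show ?thesis
    by (simp add: brw_qn_eq emeasure_eq_measure)
qed

lemma brw_q_fixed_point: "ennreal (brw_q \<mu> x A) = offspring_gf \<mu> (\<lambda>z. ennreal (brw_q \<mu> z A)) x"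
proof -
  interpret prob_space "brw_space \<mu>" by (rule prob_space_brw_space)
  have "ennreal (brw_q \<mu> x A) =
      emeasure (brw_space \<mu>) {\<omega>. brw_shift \<omega> \<in> local_ext A (brw_from {#x#} \<omega> 1)}"
    by (simp only: brw_q_eq emeasure_eq_measure local_ext_unfold[of A "{#x#}", symmetric])
  also have "\<dots> = offspring_gf \<mu> (\<lambda>z. emeasure (brw_space \<mu>) (local_ext A {#z#})) x"
    using emeasure_shift_event_multiplicative[OF sets_local_ext multiplicative_local_ext, where \<zeta> = "{#x#}"]
    by simp
  finally show ?thesis
    by (simp add: brw_q_eq emeasure_eq_measure)
qed

text \<open>Global extinction implies local extinction, and local extinction in \<open>A\<close> is the
  increasing limit of the events counted by \<open>q\<^sub>n\<close>.\<close>

lemma brw_qbar_le_q: "brw_qbar \<mu> x \<le> brw_q \<mu> x A"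
proof -
  interpret prob_space "brw_space \<mu>" by (rule prob_space_brw_space)
  show ?thesis unfolding brw_qbar_eq brw_q_eq
    by (rule finite_measure_mono[OF local_ext_UNIV_subset sets_local_ext])
qed

lemma brw_qn_le_q: "brw_qn \<mu> n x A \<le> brw_q \<mu> x A"
proof -
  interpret prob_space "brw_space \<mu>" by (rule prob_space_brw_space)
  have "avoid (after n A) {#x#} \<subseteq> local_ext A {#x#}"
    by (auto simp: local_ext_def)
  then show ?thesis unfolding brw_qn_eq brw_q_eq
    by (rule finite_measure_mono[OF _ sets_local_ext])
qed

text \<open>Monotonicity of \<open>G\<close> propagates the comparison \<open>q\<^sub>0(\<cdot>, A) \<le> q\<^sub>b\<^sub>a\<^sub>r\<close> to all \<open>q\<^sub>n\<close>.\<close>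

lemma brw_qn_le_qbar:
  assumes base: "\<And>x. brw_qn \<mu> 0 x A \<le> brw_qbar \<mu> x"
  shows "brw_qn \<mu> n x A \<le> brw_qbar \<mu> x"
proof (induction n arbitrary: x)
  case (Suc n)
  have "ennreal (brw_qn \<mu> (Suc n) x A) = offspring_gf \<mu> (\<lambda>z. ennreal (brw_qn \<mu> n z A)) x"
    by (rule brw_qn_Suc)
  also have "\<dots> \<le> offspring_gf \<mu> (\<lambda>z. ennreal (brw_qbar \<mu> z)) x"
    by (intro offspring_gf_mono ennreal_leI Suc.IH)
  also have "\<dots> = ennreal (brw_qbar \<mu> x)"
    using brw_q_fixed_point[of x UNIV] by (simp add: brw_qbar_def)
  finally show ?case
    by (simp add: brw_qbar_eq)
qed (rule base)

lemma brw_q_eq_qbar_iff: "(\<forall>x. brw_q \<mu> x A = brw_qbar \<mu> x) \<longleftrightarrow> (\<forall>x. brw_qn \<mu> 0 x A \<le> brw_qbar \<mu> x)"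
proof
  assume "\<forall>x. brw_q \<mu> x A = brw_qbar \<mu> x"
  then show "\<forall>x. brw_qn \<mu> 0 x A \<le> brw_qbar \<mu> x"
    using brw_qn_le_q by metis
next
  assume base: "\<forall>x. brw_qn \<mu> 0 x A \<le> brw_qbar \<mu> x"
  have "brw_q \<mu> x A \<le> brw_qbar \<mu> x" for x
    using tendsto_brw_qn[of x A] brw_qn_le_qbar[of A] base
    by (auto simp: brw_q_eq intro: LIMSEQ_le_const2)
  then show "\<forall>x. brw_q \<mu> x A = brw_qbar \<mu> x"
    using brw_qbar_le_q by (metis order_antisym)
qed

lemma local_survival_eq: "local_survival \<mu> x A = - local_ext A {#x#}"
  by (auto simp: local_survival_def local_ext_def avoid_def after_def brw_gen_eq_brw_from Suc_le_eq
      simp del: brw_from.simps)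

lemma global_survival_eq: "global_survival \<mu> x = - local_ext UNIV {#x#}"
proof -
  have "\<omega> \<in> local_ext UNIV {#x#} \<longleftrightarrow> (\<exists>n. \<forall>k>n. brw_from {#x#} \<omega> k = {#})" for \<omega>
    by (auto simp: local_ext_def avoid_def after_def multiset_eq_iff simp del: brw_from.simps)
  also have "\<dots> \<omega> \<longleftrightarrow> (\<exists>n. brw_gen x \<omega> n = {#})" for \<omega>
    unfolding brw_gen_eq_brw_from by (meson brw_from_extinct less_imp_le lessI)
  finally show ?thesis
    by (auto simp: global_survival_def)
qed

text \<open>Since local survival implies global survival, the conditional probability of local
  survival given global survival is \<open>(1 - q(x,A)) / (1 - qbar(x))\<close>.\<close>

lemma conditional_local_survival:
  "measure (brw_space \<mu>) (local_survival \<mu> x A \<inter> global_survival \<mu> x)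
     / measure (brw_space \<mu>) (global_survival \<mu> x) = (1 - brw_q \<mu> x A) / (1 - brw_qbar \<mu> x)"
proof -
  interpret prob_space "brw_space \<mu>" by (rule prob_space_brw_space)
  have "local_survival \<mu> x A \<inter> global_survival \<mu> x = local_survival \<mu> x A"
    using local_ext_UNIV_subset[of "{#x#}" A] by (auto simp: local_survival_eq global_survival_eq)
  moreover have "measure (brw_space \<mu>) (- local_ext B {#x#}) = 1 - measure (brw_space \<mu>) (local_ext B {#x#})" for B
    using prob_compl[OF sets_local_ext[of B "{#x#}"]] by (simp add: Compl_eq_Diff_UNIV)
  ultimately show ?thesis
    by (simp add: local_survival_eq global_survival_eq brw_q_eq brw_qbar_eq)
qed

end

lemma eq_iff_survival_ratio:
  fixes q qbar :: real
  assumes "qbar \<le> q" "q \<le> 1"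
  shows "q = qbar \<longleftrightarrow> qbar = 1 \<or> (1 - q) / (1 - qbar) = 1"
  using assms by (cases "qbar = 1") (auto simp: field_simps)

theorem mainTheorem15:
  fixes \<mu> :: "'a::countable \<Rightarrow> 'a multiset pmf" and A :: "'a set"
  assumes "A \<noteq> {}"
  shows "((\<forall>x. brw_q \<mu> x A = brw_qbar \<mu> x) \<longleftrightarrow> (\<forall>x. brw_qn \<mu> 0 x A \<le> brw_qbar \<mu> x))
       \<and> ((\<forall>x. brw_qn \<mu> 0 x A \<le> brw_qbar \<mu> x) \<longleftrightarrow>
          (\<forall>x. brw_qbar \<mu> x = 1 \<or>
               measure (brw_space \<mu>) (local_survival \<mu> x A \<inter> global_survival \<mu> x)
                 / measure (brw_space \<mu>) (global_survival \<mu> x) = 1))"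
proof -
  interpret prob_space "brw_space \<mu>" by (rule prob_space_brw_space)
  have pointwise: "brw_q \<mu> x A = brw_qbar \<mu> x \<longleftrightarrow>
      brw_qbar \<mu> x = 1 \<or>
      measure (brw_space \<mu>) (local_survival \<mu> x A \<inter> global_survival \<mu> x)
        / measure (brw_space \<mu>) (global_survival \<mu> x) = 1" for x
    unfolding conditional_local_survival
    by (rule eq_iff_survival_ratio[OF brw_qbar_le_q]) (simp add: brw_q_eq)
  show ?thesis
    unfolding brw_q_eq_qbar_iff[symmetric] pointwise by simp
qed

end
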